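(* Let $\mathcal Q_0=\mathbb{R}^{N}$ with coordinates $(\mu_0^1,\dots,\mu_0^{k_-},x_0^1,\dots,x_0^{N-k_-})$ and $\mathcal Q_1=\mathbb{R}^{N}$ with coordinates $x_1$. At step $0$ let the quantum pre-constraints be $^-\hat C^0_I=\hat p_{\mu,I}-\partial S_0/\partial\mu_0^I$ ($I=1,\dots,k_-$) for a smooth real function $S_0(\mu_0,x_0)$, with $\hat p_{\mu,I}=-i\hbar\partial_{\mu_0^I}$, and let $^-G^0_K(\mu_0,x_0)=0$ ($K=1,\dots,k_-$) be global gauge conditions on configuration variables only (unique solution $\mu_0^K=c^K(x_0)$ with nonvanishing $\det(\partial\,{}^-G^0_K/\partial\mu_0^I)$). Set $^-\mathbb P_0:=\prod_{I}\delta(^-\hat C^0_I)$ acting on the $\mathcal Q_0$ variables, and let $^+\mathbb P_1$ be a linear operator acting only on the $\mathcal Q_1$ variables. Given a kinematical propagator $\kappa_{0\to1}(x_0,x_1)$ (a function on $\mathcal Q_0\times\mathcal Q_1$), define the physical propagator $K_{0\to1}:={}^+\mathbb P_1\,({}^-\mathbb P_0)^*\kappa_{0\to1}$ and the pre-fixed propagator $K^{f_+}_{0\to1}:={}^+\mathbb P_1\kappa_{0\to1}$. For a pre-physical state $^-\psi^{\rm phys}_0={}^-\mathbb P_0\psi_0^{\rm kin}$ define $U_{0\to1}\,{}^-\psi^{\rm phys}_0(x_1):=\int_{\mathcal Q_0}dx_0\,K^{f_+}_{0\to1}(x_0,x_1)\,{}^-\psi^{\rm phys}_0(x_0)=:{}^+\psi^{\rm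 phys}_1(x_1)$. Then $$^+\psi^{\rm phys}_1(x_1)=\int_{\mathcal Q_0}d\xi^-_0(\mu_0,x_0)\,K_{0\to1}(\mu_0,x_0;x_1)\,{}^-\psi^{\rm phys}_0(\mu_0,x_0)=(2\pi\hbar)^{k_-}\int\prod_\alpha dx_0^\alpha\,K_{0\to1}(\mu_0,x_0;x_1)\,{}^-\psi^{\rm phys}_0(\mu_0,x_0),$$ with Faddeev–Popov regularized pre-measure $$d\xi^-_0(\mu_0,x_0):=(2\pi)^{k_-}\prod_{I,\alpha}d\mu_0^Idx_0^\alpha\,\Big|\det\big([^-\hat G^0_K,{}^-\hat C^0_I]\big)\Big|\prod_{K=1}^{k_-}\delta\big(^-G^0_K(\mu_0,x_0)\big).$$ The map $U_{0\to1}$ so expressed is independent of the value of $\mu_0$ and of the particular choice of gauge conditions $^-G^0_K$.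
   Context: $\delta(\hat C):=\frac{1}{2\pi\hbar}\int_{\mathbb{R}}ds\,e^{is\hat C/\hbar}$ (improper group-averaging projector). For an operator $\hat A$, $(\hat A)^*$ denotes its complex conjugate (not the adjoint), i.e. $(\hat A)^*f:=(\hat A f^* )^*$; thus $({}^-\mathbb P_0)^*\kappa_{0\to1}$ is the complex conjugate of $^-\mathbb P_0$ applied to $\kappa_{0\to1}^*$ in the $x_0$ variables, so that $K_{0\to1}^*$ is annihilated by the pre-constraints. $[^-\hat G^0_K,{}^-\hat C^0_I]=i\hbar\,\partial\,{}^-G^0_K/\partial\mu_0^I$. The constraints $^-\hat C^0_I$ are self-adjoint with respect to the kinematical $L^2$ inner product on $\mathcal Q_0$. All functions are assumed such that the integrals are defined. *)

theory Defs
  imports "HOL-Analysis.Analysis"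
begin

text \<open>Smoothness (C-infinity) of a map between real normed spaces: it lies in a family of
  everywhere-differentiable maps that is closed under taking directional derivatives.\<close>
definition smooth_map :: "('a::real_normed_vector \<Rightarrow> 'b::real_normed_vector) \<Rightarrow> bool" where
  "smooth_map f \<longleftrightarrow> (\<exists>F. f \<in> F \<and>
     (\<forall>g\<in>F. (\<forall>p. g differentiable (at p)) \<and>
              (\<forall>v. (\<lambda>p. frechet_derivative g (at p) v) \<in> F)))"

text \<open>Configuration space Q0 = R^k x R^m with coordinates (mu_0, x_0).\<close>

definition shift_mu :: "real^'k \<Rightarrow> ((real^'k) \<times> (real^'m)) \<Rightarrow> ((real^'k) \<times> (real^'m))" where
  "shift_mu s p = (fst p + s, snd p)"

text \<open>The unitary group exp(i s^I C_I / hbar) generated by the commuting pre-constraints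
  C_I = p_{mu,I} - dS/dmu^I (p = -i hbar d/dmu), i.e. e^{iS/hbar} (translation by s in mu) e^{-iS/hbar}.\<close>
definition pre_flow :: "real \<Rightarrow> ((real^'k) \<times> (real^'m) \<Rightarrow> real) \<Rightarrow> real^'k
     \<Rightarrow> ((real^'k) \<times> (real^'m) \<Rightarrow> complex) \<Rightarrow> ((real^'k) \<times> (real^'m) \<Rightarrow> complex)" where
  "pre_flow hbar S s f = (\<lambda>p. cis ((S p - S (shift_mu s p)) / hbar) * f (shift_mu s p))"

text \<open>Pre-projector P_0 = prod_I delta(C_I) = (2 pi hbar)^{-k} int d^k s exp(i s^I C_I/hbar).\<close>
definition pre_proj :: "real \<Rightarrow> ((real^'k) \<times> (real^'m) \<Rightarrow> real)
     \<Rightarrow> ((real^'k) \<times> (real^'m) \<Rightarrow> complex) \<Rightarrow> ((real^'k) \<times> (real^'m) \<Rightarrow> complex)" where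
  "pre_proj hbar S f = (\<lambda>p. complex_of_real ((1 / (2 * pi * hbar)) ^ CARD('k)) *
      (\<integral>s. pre_flow hbar S s f p \<partial>lborel))"

text \<open>Complex conjugate (not adjoint) of an operator: A^* f = (A f^*)^*.\<close>
definition cconj_op :: "(('a \<Rightarrow> complex) \<Rightarrow> ('a \<Rightarrow> complex)) \<Rightarrow> ('a \<Rightarrow> complex) \<Rightarrow> ('a \<Rightarrow> complex)" where
  "cconj_op A f = (\<lambda>p. cnj (A (\<lambda>q. cnj (f q)) p))"

definition phys_prop :: "real \<Rightarrow> ((real^'k) \<times> (real^'m) \<Rightarrow> real)
     \<Rightarrow> (('c \<Rightarrow> complex) \<Rightarrow> ('c \<Rightarrow> complex))
     \<Rightarrow> ((real^'k) \<times> (real^'m) \<Rightarrow> 'c \<Rightarrow> complex) \<Rightarrow> ((real^'k) \<times> (real^'m)) \<Rightarrow> 'c \<Rightarrow> complex" where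
  "phys_prop hbar S P1 kappa = (\<lambda>p x1. P1 (\<lambda>y. cconj_op (pre_proj hbar S) (\<lambda>q. kappa q y) p) x1)"

definition prefixed_prop :: "(('c \<Rightarrow> complex) \<Rightarrow> ('c \<Rightarrow> complex))
     \<Rightarrow> ('q \<Rightarrow> 'c \<Rightarrow> complex) \<Rightarrow> 'q \<Rightarrow> 'c \<Rightarrow> complex" where
  "prefixed_prop P1 kappa = (\<lambda>p x1. P1 (kappa p) x1)"

definition evolve :: "(('c \<Rightarrow> complex) \<Rightarrow> ('c \<Rightarrow> complex))
     \<Rightarrow> ((real^'k) \<times> (real^'m) \<Rightarrow> 'c \<Rightarrow> complex) \<Rightarrow> ((real^'k) \<times> (real^'m) \<Rightarrow> complex) \<Rightarrow> 'c \<Rightarrow> complex" where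
  "evolve P1 kappa psi = (\<lambda>x1. \<integral>p. prefixed_prop P1 kappa p x1 * psi p \<partial>lborel)"

definition mu_jac :: "((real^'k) \<times> (real^'m) \<Rightarrow> real^'k) \<Rightarrow> (real^'k) \<times> (real^'m) \<Rightarrow> real^'k^'k" where
  "mu_jac G p = (\<chi> K I. frechet_derivative G (at p) (axis I 1, 0) $ K)"

text \<open>Matrix of commutators [G_K, C_I] = i hbar dG_K/dmu^I.\<close>
definition gauge_comm :: "real \<Rightarrow> ((real^'k) \<times> (real^'m) \<Rightarrow> real^'k) \<Rightarrow> (real^'k) \<times> (real^'m) \<Rightarrow> complex^'k^'k" where
  "gauge_comm hbar G p = (\<chi> K I. \<i> * complex_of_real hbar * complex_of_real (mu_jac G p $ K $ I))"

text \<open>int d^k mu f(mu) prod_K delta(G_K(mu,x)): pullback of the delta distribution along the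
  map mu |-> G(mu,x) (standard formula sum over zeros of f / |det dG/dmu|).\<close>
definition delta_int :: "((real^'k) \<times> (real^'m) \<Rightarrow> real^'k) \<Rightarrow> real^'m \<Rightarrow> (real^'k \<Rightarrow> complex) \<Rightarrow> complex" where
  "delta_int G x f = (\<Sum>\<mu>\<in>{\<mu>. G (\<mu>, x) = 0}. f \<mu> / complex_of_real \<bar>det (mu_jac G (\<mu>, x))\<bar>)"

definition xi_int :: "real \<Rightarrow> ((real^'k) \<times> (real^'m) \<Rightarrow> real^'k) \<Rightarrow> ((real^'k) \<times> (real^'m) \<Rightarrow> complex) \<Rightarrow> complex" where
  "xi_int hbar G F = complex_of_real ((2 * pi) ^ CARD('k)) *
     (\<integral>x. delta_int G x (\<lambda>\<mu>. complex_of_real (cmod (det (gauge_comm hbar G (\<mu>, x)))) * F (\<mu>, x)) \<partial>lborel)"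

end

theory Submission
  imports Defs
begin

text \<open>
  Conjugating by the phase e^{iS/hbar}, the pre-constraints become plain
  mu-derivatives, so the group average defining the pre-projector is a translation average in
  the mu-variables: P_0 f (mu, x) = (2 pi hbar)^{-k} e^{iS(mu,x)/hbar} Phi_f(x), where
  Phi_f(x) = int dnu e^{-iS(nu,x)/hbar} f(nu,x) (translation invariance of Lebesgue measure).
  The complex conjugate (P_0)^* is the pre-projector for -S.  Hence both the pre-physical
  state and the physical propagator K are a phase times a function of x alone, and the phases
  cancel in the product K * psi: the integrand is constant along the gauge orbits.
  Consequently (1) the Faddeev-Popov integral, which evaluates the integrand at the unique zero
  of the gauge condition weighted by |det [G, C]| / |det dG/dmu| = hbar^k, equals (2 pi hbar)^k
  times the integral over x at an arbitrary mu_0, independent of G; and (2) by Fubini, the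
  evolution integral is an x-integral of mu-integrals, each of which (using that P_1 is linear
  and commutes with the mu-integration) gives the same orbit-constant value.
\<close>

text \<open>Lebesgue integrals over a Euclidean space are invariant under translation;
  this is what turns the group average over the constraint flow into an average over mu.\<close>
lemma lborel_integral_translate:
  fixes f :: "'a::euclidean_space \<Rightarrow> 'b::{banach,second_countable_topology}"
  shows "(\<integral>s. f (c + s) \<partial>lborel) = (\<integral>s. f s \<partial>lborel)"
proof (cases "integrable lborel f")
  case True
  hence [measurable]: "f \<in> borel_measurable borel" by (simp add: borel_measurable_integrable)
  have "(\<integral>s. f s \<partial>lborel) = (\<integral>s. f s \<partial>distr lborel borel ((+) c))"
    by (simp add: lborel_distr_plus)
  also have "\<dots> = (\<integral>s. f (c + s) \<partial>lborel)"
    by (rule integral_distr) auto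
  finally show ?thesis ..
next
  case False
  have "\<not> integrable lborel (\<lambda>s. f (c + s))"
  proof
    assume int: "integrable lborel (\<lambda>s. f (c + s))"
    hence [measurable]: "(\<lambda>s. f (c + s)) \<in> borel_measurable borel"
      by (simp add: borel_measurable_integrable)
    have "integrable (distr lborel borel ((+) (- c))) (\<lambda>s. f (c + s))"
      by (simp add: lborel_distr_plus int)
    hence "integrable lborel (\<lambda>s. f (c + (- c + s)))"
      by (subst (asm) integrable_distr_eq) auto
    with False show False by simp
  qed
  with False show ?thesis by (simp add: not_integrable_integral_eq)
qed

lemma pre_flow_split:
  "pre_flow hbar S s f (\<mu>, x) =
     cis (S (\<mu>, x) / hbar) * (cis (- S (\<mu> + s, x) / hbar) * f (\<mu> + s, x))"
  by (simp add: pre_flow_def shift_mu_def cis_mult diff_divide_distrib mult.assoc)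

definition mu_avg :: "real \<Rightarrow> ((real^'k) \<times> (real^'m) \<Rightarrow> real)
     \<Rightarrow> ((real^'k) \<times> (real^'m) \<Rightarrow> complex) \<Rightarrow> real^'m \<Rightarrow> complex" where
  "mu_avg hbar S f x = (\<integral>\<nu>. cis (- S (\<nu>, x) / hbar) * f (\<nu>, x) \<partial>lborel)"

lemma pre_proj_factor:
  fixes S :: "(real^'k) \<times> (real^'m) \<Rightarrow> real"
  shows "pre_proj hbar S f (\<mu>, x) =
     complex_of_real ((1 / (2 * pi * hbar)) ^ CARD('k)) * cis (S (\<mu>, x) / hbar) * mu_avg hbar S f x"
proof -
  have "(\<integral>s. pre_flow hbar S s f (\<mu>, x) \<partial>lborel)
      = cis (S (\<mu>, x) / hbar) * (\<integral>s. cis (- S (\<mu> + s, x) / hbar) * f (\<mu> + s, x) \<partial>lborel)"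
    by (simp add: pre_flow_split)
  also have "(\<integral>s. cis (- S (\<mu> + s, x) / hbar) * f (\<mu> + s, x) \<partial>lborel) = mu_avg hbar S f x"
    unfolding mu_avg_def by (rule lborel_integral_translate[of "\<lambda>\<nu>. cis (- S (\<nu>, x) / hbar) * f (\<nu>, x)"])
  finally show ?thesis by (simp add: pre_proj_def mult.assoc)
qed

lemma pre_flow_neg:
  "pre_flow hbar (\<lambda>p. - S p) s f p = cnj (pre_flow hbar S s (\<lambda>q. cnj (f q)) p)"
  by (simp add: pre_flow_def cis_cnj minus_divide_left)

lemma cconj_pre_proj:
  "cconj_op (pre_proj hbar S) f = pre_proj hbar (\<lambda>p. - S p) f"
  by (simp add: fun_eq_iff cconj_op_def pre_proj_def pre_flow_neg
        flip: Bochner_Integration.integral_cnj)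

lemma integrable_mu_avg_integrand:
  assumes "integrable lborel (\<lambda>s. pre_flow hbar S s f (0, x))"
  shows "integrable lborel (\<lambda>\<nu>. cis (- S (\<nu>, x) / hbar) * f (\<nu>, x))"
proof -
  have "integrable lborel (\<lambda>s. cis (- S (0, x) / hbar) * pre_flow hbar S s f (0, x))"
    using assms by simp
  moreover have "cis (- S (0, x) / hbar) * pre_flow hbar S s f (0, x)
      = cis (- S (s, x) / hbar) * f (s, x)" for s
    by (simp add: pre_flow_split mult.assoc[symmetric] cis_mult)
  ultimately show ?thesis by simp
qed

lemma linear_op_scale:
  fixes P :: "('a \<Rightarrow> 'b::comm_ring) \<Rightarrow> ('a \<Rightarrow> 'b)"
  assumes "\<forall>a b f g. P (\<lambda>y. a * f y + b * g y) = (\<lambda>y. a * P f y + b * P g y)"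
  shows "P (\<lambda>y. a * f y) = (\<lambda>y. a * P f y)"
  using assms[rule_format, of a f 0 f] by simp

text \<open>Key fact: in K(mu, x) * psi(mu, x) the phases e^{-iS/hbar} and e^{iS/hbar} cancel, so the
  integrand of the physical inner product is constant along each mu-fibre (gauge orbit).\<close>
lemma phys_integrand_factor:
  fixes S :: "(real^'k) \<times> (real^'m) \<Rightarrow> real"
  assumes P1_scale: "\<And>a f. P1 (\<lambda>y. a * f y) = (\<lambda>y. a * P1 f y)"
  shows "phys_prop hbar S P1 kappa (\<mu>, x) z * pre_proj hbar S psi (\<mu>, x) =
    complex_of_real ((1 / (2 * pi * hbar)) ^ CARD('k)) ^ 2 *
    P1 (\<lambda>y. mu_avg hbar (\<lambda>p. - S p) (\<lambda>q. kappa q y) x) z * mu_avg hbar S psi x"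
proof -
  let ?c = "complex_of_real ((1 / (2 * pi * hbar)) ^ CARD('k))"
  have "phys_prop hbar S P1 kappa (\<mu>, x) z =
      ?c * cis (- S (\<mu>, x) / hbar) * P1 (\<lambda>y. mu_avg hbar (\<lambda>p. - S p) (\<lambda>q. kappa q y) x) z"
    by (simp add: phys_prop_def cconj_pre_proj pre_proj_factor P1_scale mult.assoc)
  moreover have "cis (- S (\<mu>, x) / hbar) * cis (S (\<mu>, x) / hbar) = 1"
    by (simp add: cis_mult)
  ultimately show ?thesis
    by (simp add: pre_proj_factor power2_eq_square algebra_simps)
qed

lemma det_gauge_comm:
  fixes G :: "(real^'k) \<times> (real^'m) \<Rightarrow> real^'k"
  assumes "hbar > 0"
  shows "cmod (det (gauge_comm hbar G p)) = hbar ^ CARD('k) * \<bar>det (mu_jac G p)\<bar>"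
proof -
  have "det (gauge_comm hbar G p) = (\<i> * complex_of_real hbar) ^ CARD('k) * complex_of_real (det (mu_jac G p))"
    unfolding det_def gauge_comm_def
    by (simp add: prod.distrib of_real_sum of_real_prod sum_distrib_left mult_ac power_mult_distrib)
  thus ?thesis using assms by (simp add: norm_mult norm_power)
qed

lemma delta_int_single_zero:
  assumes "{\<mu>. G (\<mu>, x) = 0} = {m}" and "det (mu_jac G (m, x)) \<noteq> 0"
  shows "delta_int G x (\<lambda>\<mu>. complex_of_real \<bar>det (mu_jac G (\<mu>, x))\<bar> * f \<mu>) = f m"
  using assms by (simp add: delta_int_def)

lemma xi_int_orbit_constant:
  fixes G :: "(real^'k) \<times> (real^'m) \<Rightarrow> real^'k"
  assumes hbar: "hbar > 0"
    and G_unique: "\<forall>x. \<exists>!\<mu>. G (\<mu>, x) = 0"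
    and G_det: "\<forall>p. det (mu_jac G p) \<noteq> 0"
    and F_const: "\<And>\<mu> x. F (\<mu>, x) = F (\<mu>0, x)"
  shows "xi_int hbar G F = complex_of_real ((2 * pi * hbar) ^ CARD('k)) * (\<integral>x. F (\<mu>0, x) \<partial>lborel)"
proof -
  have delta: "delta_int G x (\<lambda>\<mu>. complex_of_real (cmod (det (gauge_comm hbar G (\<mu>, x)))) * F (\<mu>, x))
      = complex_of_real (hbar ^ CARD('k)) * F (\<mu>0, x)" for x
  proof -
    obtain m where "G (m, x) = 0" and "\<And>\<mu>. G (\<mu>, x) = 0 \<Longrightarrow> \<mu> = m"
      using G_unique by blast
    hence "{\<mu>. G (\<mu>, x) = 0} = {m}" by blast
    moreover have "complex_of_real (cmod (det (gauge_comm hbar G (\<mu>, x)))) * F (\<mu>, x)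
        = complex_of_real \<bar>det (mu_jac G (\<mu>, x))\<bar> * (complex_of_real (hbar ^ CARD('k)) * F (\<mu>0, x))"
      for \<mu>
      using hbar by (simp add: det_gauge_comm F_const[of \<mu> x])
    ultimately show ?thesis
      using delta_int_single_zero[OF _ G_det[rule_format]] by simp
  qed
  show ?thesis unfolding xi_int_def delta by (simp add: power_mult_distrib)
qed

text \<open>The mu-integral of the evolution integrand over a single fibre: using that P_1 commutes
  with the mu-integration, it equals (2 pi hbar)^k times the physical integrand at any point
  mu' of the fibre.\<close>
lemma evolve_inner_integral:
  fixes S :: "(real^'k) \<times> (real^'m) \<Rightarrow> real"
    and P1 :: "('c \<Rightarrow> complex) \<Rightarrow> ('c \<Rightarrow> complex)"
  assumes hbar: "hbar \<noteq> 0"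
    and P1_scale: "\<And>a f. P1 (\<lambda>y. a * f y) = (\<lambda>y. a * P1 f y)"
    and P1_integral: "\<forall>(g :: real^'k \<Rightarrow> 'c \<Rightarrow> complex) z.
        (\<forall>y. integrable lborel (\<lambda>\<nu>. g \<nu> y)) \<longrightarrow> integrable lborel (\<lambda>\<nu>. P1 (g \<nu>) z) \<longrightarrow>
        P1 (\<lambda>y. \<integral>\<nu>. g \<nu> y \<partial>lborel) z = (\<integral>\<nu>. P1 (g \<nu>) z \<partial>lborel)"
    and int_kappa: "\<forall>y. integrable lborel (\<lambda>\<nu>. cis (S (\<nu>, x) / hbar) * kappa (\<nu>, x) y)"
    and int_orbit: "integrable lborel (\<lambda>\<mu>. P1 (kappa (\<mu>, x)) z * pre_proj hbar S psi (\<mu>, x))"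
  shows "(\<integral>\<mu>. P1 (kappa (\<mu>, x)) z * pre_proj hbar S psi (\<mu>, x) \<partial>lborel)
    = complex_of_real ((2 * pi * hbar) ^ CARD('k)) *
      (phys_prop hbar S P1 kappa (\<mu>', x) z * pre_proj hbar S psi (\<mu>', x))"
proof -
  let ?c = "complex_of_real ((1 / (2 * pi * hbar)) ^ CARD('k))"
  let ?g = "\<lambda>\<nu>. cis (S (\<nu>, x) / hbar) * P1 (kappa (\<nu>, x)) z"
  define a where "a = ?c * mu_avg hbar S psi x"
  have orbit_eq: "P1 (kappa (\<mu>, x)) z * pre_proj hbar S psi (\<mu>, x) = a * ?g \<mu>" for \<mu>
    by (simp add: a_def pre_proj_factor mult_ac)
  have c_inv: "complex_of_real ((2 * pi * hbar) ^ CARD('k)) * ?c = 1"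
    using hbar by (simp add: power_one_over[symmetric] field_simps flip: of_real_mult)
  have rhs: "complex_of_real ((2 * pi * hbar) ^ CARD('k)) *
      (phys_prop hbar S P1 kappa (\<mu>', x) z * pre_proj hbar S psi (\<mu>', x))
      = a * P1 (\<lambda>y. mu_avg hbar (\<lambda>p. - S p) (\<lambda>q. kappa q y) x) z"
    unfolding phys_integrand_factor[OF P1_scale]
  proof -
    let ?P = "P1 (\<lambda>y. mu_avg hbar (\<lambda>p. - S p) (\<lambda>q. kappa q y) x) z"
    have "complex_of_real ((2 * pi * hbar) ^ CARD('k)) * (?c\<^sup>2 * ?P * mu_avg hbar S psi x)
        = (complex_of_real ((2 * pi * hbar) ^ CARD('k)) * ?c) * (a * ?P)"
      by (simp add: a_def power2_eq_square mult_ac)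
    thus "complex_of_real ((2 * pi * hbar) ^ CARD('k)) * (?c\<^sup>2 * ?P * mu_avg hbar S psi x) = a * ?P"
      by (simp only: c_inv mult_1_left)
  qed
  show ?thesis
  proof (cases "a = 0")
    case True
    thus ?thesis unfolding rhs orbit_eq by simp
  next
    case False
    have "integrable lborel (\<lambda>\<mu>. inverse a * (a * ?g \<mu>))"
      using integrable_mult_right[OF int_orbit[unfolded orbit_eq]] .
    hence int_g: "integrable lborel ?g" using False by (simp add: mult.assoc[symmetric])
    have int_P1_g: "integrable lborel (\<lambda>\<nu>. P1 (\<lambda>y. cis (S (\<nu>, x) / hbar) * kappa (\<nu>, x) y) z)"
      using int_g by (simp add: P1_scale)
    have "P1 (\<lambda>y. mu_avg hbar (\<lambda>p. - S p) (\<lambda>q. kappa q y) x) z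
        = P1 (\<lambda>y. \<integral>\<nu>. cis (S (\<nu>, x) / hbar) * kappa (\<nu>, x) y \<partial>lborel) z"
      by (simp add: mu_avg_def)
    also have "\<dots> = (\<integral>\<nu>. P1 (\<lambda>y. cis (S (\<nu>, x) / hbar) * kappa (\<nu>, x) y) z \<partial>lborel)"
      by (rule P1_integral[rule_format, of "\<lambda>\<nu> y. cis (S (\<nu>, x) / hbar) * kappa (\<nu>, x) y" z,
            OF int_kappa[rule_format] int_P1_g])
    also have "\<dots> = (\<integral>\<nu>. ?g \<nu> \<partial>lborel)" by (simp add: P1_scale)
    finally show ?thesis unfolding rhs orbit_eq by simp
  qed
qed

lemma evolve_fubini:
  assumes "integrable lborel (\<lambda>p. prefixed_prop P1 kappa p z * psi p)"
  shows "evolve P1 kappa psi z = (\<integral>x. (\<integral>\<mu>. P1 (kappa (\<mu>, x)) z * psi (\<mu>, x) \<partial>lborel) \<partial>lborel)"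
    and "AE x in lborel. integrable lborel (\<lambda>\<mu>. P1 (kappa (\<mu>, x)) z * psi (\<mu>, x))"
    and "(\<lambda>x. \<integral>\<mu>. P1 (kappa (\<mu>, x)) z * psi (\<mu>, x) \<partial>lborel) \<in> borel_measurable lborel"
proof -
  let ?h = "\<lambda>(\<mu>, x). P1 (kappa (\<mu>, x)) z * psi (\<mu>, x)"
  have int: "integrable (lborel \<Otimes>\<^sub>M lborel) ?h"
    using assms by (simp add: lborel_prod prefixed_prop_def case_prod_beta')
  have "evolve P1 kappa psi z = integral\<^sup>L (lborel \<Otimes>\<^sub>M lborel) ?h"
    by (simp add: evolve_def lborel_prod prefixed_prop_def case_prod_beta')
  thus "evolve P1 kappa psi z = (\<integral>x. (\<integral>\<mu>. P1 (kappa (\<mu>, x)) z * psi (\<mu>, x) \<partial>lborel) \<partial>lborel)"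
    using lborel_pair.integral_snd[OF int] by simp
  show "AE x in lborel. integrable lborel (\<lambda>\<mu>. P1 (kappa (\<mu>, x)) z * psi (\<mu>, x))"
    using lborel_pair.AE_integrable_snd[OF int] by simp
  show "(\<lambda>x. \<integral>\<mu>. P1 (kappa (\<mu>, x)) z * psi (\<mu>, x) \<partial>lborel) \<in> borel_measurable lborel"
    using borel_measurable_integrable[OF lborel_pair.integrable_snd[OF int]] by simp
qed

theorem lemma3:
  fixes hbar :: real
    and S :: "(real^'k) \<times> (real^'m) \<Rightarrow> real"
    and G :: "(real^'k) \<times> (real^'m) \<Rightarrow> real^'k"
    and P1 :: "(real^'n \<Rightarrow> complex) \<Rightarrow> (real^'n \<Rightarrow> complex)"
    and kappa :: "(real^'k) \<times> (real^'m) \<Rightarrow> real^'n \<Rightarrow> complex"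
    and psi_kin :: "(real^'k) \<times> (real^'m) \<Rightarrow> complex"
    and x1 :: "real^'n"
    and mu0 :: "real^'k"
  assumes dims: "CARD('n) = CARD('k) + CARD('m)"
    and hbar: "hbar > 0"
    and S_smooth: "smooth_map S"
    and G_smooth: "smooth_map G"
    and G_unique: "\<forall>x. \<exists>!\<mu>. G (\<mu>, x) = 0"
    and G_det: "\<forall>p. det (mu_jac G p) \<noteq> 0"
    and P1_linear: "\<forall>a b f g. P1 (\<lambda>y. a * f y + b * g y) = (\<lambda>y. a * P1 f y + b * P1 g y)"
    and P1_integral: "\<forall>(g :: real^'k \<Rightarrow> real^'n \<Rightarrow> complex) z.
        (\<forall>y. integrable lborel (\<lambda>\<nu>. g \<nu> y)) \<longrightarrow> integrable lborel (\<lambda>\<nu>. P1 (g \<nu>) z) \<longrightarrow>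
        P1 (\<lambda>y. \<integral>\<nu>. g \<nu> y \<partial>lborel) z = (\<integral>\<nu>. P1 (g \<nu>) z \<partial>lborel)"
    and int_psi: "\<forall>p. integrable lborel (\<lambda>s. pre_flow hbar S s psi_kin p)"
    and int_kappa: "\<forall>p y. integrable lborel (\<lambda>s. pre_flow hbar S s (\<lambda>q. cnj (kappa q y)) p)"
    and int_U: "integrable lborel (\<lambda>p. prefixed_prop P1 kappa p x1 * pre_proj hbar S psi_kin p)"
    and int_K: "\<forall>\<mu>. integrable lborel
        (\<lambda>x. phys_prop hbar S P1 kappa (\<mu>, x) x1 * pre_proj hbar S psi_kin (\<mu>, x))"
    and int_xi: "integrable lborel (\<lambda>x. delta_int G x (\<lambda>\<mu>.
        complex_of_real (cmod (det (gauge_comm hbar G (\<mu>, x)))) *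
        (phys_prop hbar S P1 kappa (\<mu>, x) x1 * pre_proj hbar S psi_kin (\<mu>, x))))"
  shows "evolve P1 kappa (pre_proj hbar S psi_kin) x1
           = xi_int hbar G (\<lambda>p. phys_prop hbar S P1 kappa p x1 * pre_proj hbar S psi_kin p)
       \<and> xi_int hbar G (\<lambda>p. phys_prop hbar S P1 kappa p x1 * pre_proj hbar S psi_kin p)
           = complex_of_real ((2 * pi * hbar) ^ CARD('k)) *
             (\<integral>x. phys_prop hbar S P1 kappa (mu0, x) x1 * pre_proj hbar S psi_kin (mu0, x) \<partial>lborel)"
proof -
  have P1_scale: "\<And>a f. P1 (\<lambda>y. a * f y) = (\<lambda>y. a * P1 f y)"
    using linear_op_scale[OF P1_linear] .
  let ?c = "complex_of_real ((2 * pi * hbar) ^ CARD('k))"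
  let ?F = "\<lambda>p. phys_prop hbar S P1 kappa p x1 * pre_proj hbar S psi_kin p"
  have orbit_const: "\<And>\<mu> x. ?F (\<mu>, x) = ?F (mu0, x)"
    by (simp only: phys_integrand_factor[OF P1_scale])
  have xi: "xi_int hbar G ?F = ?c * (\<integral>x. ?F (mu0, x) \<partial>lborel)"
    by (rule xi_int_orbit_constant[where F = ?F, OF hbar G_unique G_det orbit_const])
  have int_kappa_orbit: "\<forall>y. integrable lborel (\<lambda>\<nu>. cis (S (\<nu>, x) / hbar) * kappa (\<nu>, x) y)" for x
  proof
    fix y
    have "integrable lborel (\<lambda>s. pre_flow hbar (\<lambda>p. - S p) s (\<lambda>q. kappa q y) (0, x))"
      using int_kappa by (simp add: pre_flow_neg)
    from integrable_mu_avg_integrand[OF this]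
    show "integrable lborel (\<lambda>\<nu>. cis (S (\<nu>, x) / hbar) * kappa (\<nu>, x) y)" by simp
  qed
  have inner: "AE x in lborel.
      (\<integral>\<mu>. P1 (kappa (\<mu>, x)) x1 * pre_proj hbar S psi_kin (\<mu>, x) \<partial>lborel) = ?c * ?F (mu0, x)"
    using evolve_fubini(2)[OF int_U]
  proof eventually_elim
    case (elim x)
    show ?case
      using hbar by (intro evolve_inner_integral[OF _ P1_scale P1_integral int_kappa_orbit elim]) simp
  qed
  have "evolve P1 kappa (pre_proj hbar S psi_kin) x1 = (\<integral>x. ?c * ?F (mu0, x) \<partial>lborel)"
    unfolding evolve_fubini(1)[OF int_U]
  proof (rule integral_cong_AE[OF evolve_fubini(3)[OF int_U] _ inner])
    show "(\<lambda>x. ?c * ?F (mu0, x)) \<in> borel_measurable lborel"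
      using int_K by (intro borel_measurable_integrable integrable_mult_right) simp
  qed
  with xi show ?thesis by simp
qed

end
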